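(* Assume the Continuum Hypothesis. Let $G$ be an uncountable abelian Polish group. Then there exists a set $X\subseteq G$ such that both $X$ and $G\setminus X$ are naively Haar meager. In particular, the naively Haar meager subsets of $G$ do not form an ideal.
   Context: Let $G$ be a Polish group. A set $X\subseteq G$ is called naively Haar meager if there are a compact metrizable space $K$ and a continuous map $f\colon K\to G$ such that $f^{-1}(gXh)$ is meager in $K$ for every $g,h\in G$. *)

theory Defs
  imports "HOL-Analysis.Analysis" "HOL-Library.Equipollence"
begin

definition continuum_hypothesis :: bool where
  "continuum_hypothesis \<longleftrightarrow> (\<forall>A :: real set. countable A \<or> A \<approx> (UNIV :: real set))"

definition nowhere_dense_in :: "'a topology \<Rightarrow> 'a set \<Rightarrow> bool" where
  "nowhere_dense_in T S \<longleftrightarrow> S \<subseteq> topspace T \<and> T interior_of (T closure_of S) = {}"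

definition meager_in :: "'a topology \<Rightarrow> 'a set \<Rightarrow> bool" where
  "meager_in T S \<longleftrightarrow>
     (\<exists>F :: nat \<Rightarrow> 'a set. (\<forall>n. nowhere_dense_in T (F n)) \<and> S \<subseteq> (\<Union>n. F n))"

text \<open>Every compact metrizable space
  has cardinality at most the continuum, hence is homeomorphic to a space whose
  carrier is a subset of the reals; so quantifying over abstract topologies on
  type real covers all compact metrizable spaces up to homeomorphism.  The compact
  space is required to be nonempty (with the empty space every set would trivially
  qualify, contradicting the paper's claim that the family is not an ideal).\<close>
definition naively_haar_meager :: "'g :: {polish_space, topological_ab_group_add} set \<Rightarrow> bool" where
  "naively_haar_meager X \<longleftrightarrow>
     (\<exists>(K :: real topology) (f :: real \<Rightarrow> 'g).
        topspace K \<noteq> {} \<and> compact_space K \<and> metrizable_space K \<and>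
        continuous_map K euclidean f \<and>
        (\<forall>g h. meager_in K {k \<in> topspace K. f k \<in> {g + x + h | x. x \<in> X}}))"

end

theory Submission
  imports Defs
begin

text \<open>A Cantor-scheme construction inside the condensation points yields nonempty compact perfect
  sets \<open>A\<close> and \<open>B\<close> such that \<open>(x, y) \<mapsto> x - y\<close> is injective on \<open>A \<times> B\<close>; hence every translate
  of \<open>B\<close> meets \<open>A\<close> in at most one point, and vice versa.  Under CH, enumerate \<open>G\<close> along a
  well-order with countable initial segments and let \<open>X\<close> consist of the points of \<open>B + g\<close> that
  do not lie in any earlier \<open>A + h\<close>.  Then every translate of \<open>X\<close> meets \<open>A\<close>, and every
  translate of \<open>G - X\<close> meets \<open>B\<close>, in a countable set.  A countable subset of a perfect compact
  space is meager, so \<open>A\<close> (resp. \<open>B\<close>) witnesses that \<open>X\<close> (resp. \<open>G - X\<close>) is naively Haar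
  meager, while by the Baire category theorem \<open>G\<close> itself is not.\<close>

section \<open>Pairs of perfect sets with injective differences\<close>

definition diff_separated :: "'i set \<Rightarrow> ('i \<Rightarrow> 'g::{metric_space, minus}) \<Rightarrow> ('i \<Rightarrow> 'g) \<Rightarrow> real \<Rightarrow> bool" where
  "diff_separated I a b \<delta> \<longleftrightarrow>
     (\<forall>i\<in>I. \<forall>j\<in>I. \<forall>i'\<in>I. \<forall>j'\<in>I. (i, j) \<noteq> (i', j') \<longrightarrow> (\<forall>x y x' y'.
        dist x (a i) \<le> \<delta> \<longrightarrow> dist y (b j) \<le> \<delta> \<longrightarrow> dist x' (a i') \<le> \<delta> \<longrightarrow> dist y' (b j') \<le> \<delta> \<longrightarrow>
        x - y \<noteq> x' - y'))"

lemma diff_separated_mono: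
  "diff_separated I a b \<delta> \<Longrightarrow> \<delta>' \<le> \<delta> \<Longrightarrow> diff_separated I a b \<delta>'"
  unfolding diff_separated_def by (meson order_trans)

lemma diff_separated_inj_on:
  assumes "diff_separated I a b \<delta>" "0 \<le> \<delta>"
  shows "inj_on (\<lambda>(i, j). a i - b j) (I \<times> I)"
  using assms unfolding diff_separated_def inj_on_def by fastforce

lemma diff_separated_disjoint_left:
  assumes "diff_separated I a b \<delta>" "0 \<le> \<delta>" "i \<in> I" "i' \<in> I" "i \<noteq> i'"
  shows "disjnt (cball (a i) \<delta>) (cball (a i') \<delta>)"
  using assms unfolding diff_separated_def disjnt_def
  by (fastforce simp: dist_commute dest: spec[of _ "b i"])

lemma diff_separated_disjoint_right:
  assumes "diff_separated I a b \<delta>" "0 \<le> \<delta>" "j \<in> I" "j' \<in> I" "j \<noteq> j'"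
  shows "disjnt (cball (b j) \<delta>) (cball (b j') \<delta>)"
  using assms unfolding diff_separated_def disjnt_def
  by (fastforce simp: dist_commute dest: spec[of _ "a j"])

lemma eventually_dist_diff_less:
  fixes u v :: "'g::{metric_space, topological_ab_group_add}"
  assumes "r > 0"
  shows "\<forall>\<^sub>F \<delta> in at_right 0. \<forall>x y. dist x u \<le> \<delta> \<longrightarrow> dist y v \<le> \<delta> \<longrightarrow> dist (x - y) (u - v) < r"
proof -
  have "continuous (at (u, v)) (\<lambda>z. fst z - snd z)"
    by (intro continuous_intros)
  then obtain d where "d > 0" and d: "\<And>z. dist z (u, v) < d \<Longrightarrow> dist (fst z - snd z) (u - v) < r"
    using assms unfolding continuous_at_eps_delta by fastforce
  have "dist (x - y) (u - v) < r" if "dist x u < d / 2" "dist y v < d / 2" for x y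
  proof -
    have "dist (x, y) (u, v) \<le> dist x u + dist y v"
      unfolding dist_Pair_Pair using sqrt_sum_squares_le_sum_abs[of "dist x u" "dist y v"] by simp
    with that d[of "(x, y)"] show ?thesis
      by simp
  qed
  then show ?thesis
    unfolding eventually_at_right_field using \<open>d > 0\<close>
    by (intro exI[of _ "d / 2"]) auto
qed

lemma eventually_diff_ne:
  fixes p q p' q' :: "'g::{metric_space, topological_ab_group_add}"
  assumes "p - q \<noteq> p' - q'"
  shows "\<forall>\<^sub>F \<delta> in at_right 0. \<forall>x y x' y'. dist x p \<le> \<delta> \<longrightarrow> dist y q \<le> \<delta> \<longrightarrow>
           dist x' p' \<le> \<delta> \<longrightarrow> dist y' q' \<le> \<delta> \<longrightarrow> x - y \<noteq> x' - y'"
proof -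
  define r where "r = dist (p - q) (p' - q') / 2"
  have "r > 0"
    using assms unfolding r_def by simp
  have ne: "dist (x - y) (p - q) < r \<Longrightarrow> dist (x' - y') (p' - q') < r \<Longrightarrow> x - y \<noteq> x' - y'"
    for x y x' y'
    using dist_triangle3[of "p - q" "p' - q'" "x - y"] unfolding r_def by auto
  show ?thesis
    using eventually_conj[OF eventually_dist_diff_less[OF \<open>r > 0\<close>, of p q]
        eventually_dist_diff_less[OF \<open>r > 0\<close>, of p' q']]
    by (rule eventually_mono) (use ne in blast)
qed

lemma eventually_diff_separated:
  fixes a b :: "'i \<Rightarrow> 'g::{metric_space, topological_ab_group_add}"
  assumes "finite I" "inj_on (\<lambda>(i, j). a i - b j) (I \<times> I)"
  shows "\<forall>\<^sub>F \<delta> in at_right 0. diff_separated I a b \<delta>"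
proof -
  have "\<forall>\<^sub>F \<delta> in at_right 0. (i, j) \<noteq> (i', j') \<longrightarrow> (\<forall>x y x' y'. dist x (a i) \<le> \<delta> \<longrightarrow>
          dist y (b j) \<le> \<delta> \<longrightarrow> dist x' (a i') \<le> \<delta> \<longrightarrow> dist y' (b j') \<le> \<delta> \<longrightarrow> x - y \<noteq> x' - y')"
    if "i \<in> I" "j \<in> I" "i' \<in> I" "j' \<in> I" for i j i' j'
  proof (cases "(i, j) = (i', j')")
    case False
    then have "a i - b j \<noteq> a i' - b j'"
      using inj_onD[OF assms(2), of "(i, j)" "(i', j')"] that by auto
    then show ?thesis
      by (rule eventually_mono[OF eventually_diff_ne]) simp
  qed simp
  then show ?thesis
    unfolding diff_separated_def using assms(1) by (simp add: eventually_ball_finite_distrib)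
qed

lemma exists_diff_separated:
  fixes a b :: "'i \<Rightarrow> 'g::{metric_space, topological_ab_group_add}"
  assumes "finite I" "inj_on (\<lambda>(i, j). a i - b j) (I \<times> I)"
  obtains \<delta> where "\<delta> > 0" "diff_separated I a b \<delta>"
  using eventually_happens'[OF trivial_limit_at_right_real
      eventually_conj[OF eventually_at_right_less eventually_diff_separated[OF assms]]] that
  by blast

lemma inj_on_diff_imp_inj_on_left:
  assumes "inj_on (\<lambda>(i, j). (a i - b j :: 'g::ab_group_add)) (I \<times> J)" "j \<in> J"
  shows "inj_on a I"
  using assms unfolding inj_on_def by (metis SigmaI case_prod_conv prod.inject)

lemma inj_on_diff_imp_inj_on_right:
  assumes "inj_on (\<lambda>(i, j). (a i - b j :: 'g::ab_group_add)) (I \<times> J)" "i \<in> I"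
  shows "inj_on b J"
  using assms unfolding inj_on_def by (metis SigmaI case_prod_conv prod.inject diff_left_imp_eq)

lemma inj_on_diff_swap:
  fixes a b :: "_ \<Rightarrow> 'g::ab_group_add"
  shows "inj_on (\<lambda>(i, j). a i - b j) (I \<times> J) \<longleftrightarrow> inj_on (\<lambda>(j, i). b j - a i) (J \<times> I)"
proof -
  have "b j - a i = b j' - a i' \<longleftrightarrow> a i - b j = a i' - b j'" for i j i' j'
    by (metis minus_diff_eq)
  then show ?thesis
    unfolding inj_on_def by auto
qed

lemma inj_on_diff_insert_left:
  fixes a b :: "'i \<Rightarrow> 'g::ab_group_add"
  assumes "finite I" "finite J" "inj_on b J" "inj_on (\<lambda>(i, j). a i - b j) (I \<times> J)"
    and "infinite Q" "i \<notin> I"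
  obtains z where "z \<in> Q" "inj_on (\<lambda>(i', j). (a(i := z)) i' - b j) (insert i I \<times> J)"
proof -
  let ?Bad = "(\<lambda>(i', j, j'). a i' - b j' + b j) ` (I \<times> J \<times> J)"
  have "finite ?Bad"
    using assms(1,2) by auto
  then have "infinite (Q - ?Bad)"
    using assms(5) by (rule Diff_infinite_finite)
  then obtain z where "z \<in> Q" "z \<notin> ?Bad"
    using infinite_imp_nonempty by blast
  have new: "z - b j \<noteq> a i' - b j'" if "i' \<in> I" "j \<in> J" "j' \<in> J" for i' j j'
  proof
    assume "z - b j = a i' - b j'"
    then have "z = (\<lambda>(i', j, j'). a i' - b j' + b j) (i', j, j')"
      by (simp add: algebra_simps)
    with \<open>z \<notin> ?Bad\<close> that show False
      by blast
  qed
  have "inj_on (\<lambda>(i', j). (a(i := z)) i' - b j) (insert i I \<times> J)"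
  proof (rule inj_onI, clarify)
    fix i1 j1 i2 j2
    assume mem: "i1 \<in> insert i I" "j1 \<in> J" "i2 \<in> insert i I" "j2 \<in> J"
      and eq: "(a(i := z)) i1 - b j1 = (a(i := z)) i2 - b j2"
    show "i1 = i2 \<and> j1 = j2"
      using mem eq new[of i2 j1 j2] new[of i1 j2 j1] inj_onD[OF assms(3), of j1 j2]
        inj_onD[OF assms(4), of "(i1, j1)" "(i2, j2)"] assms(6)
      by (cases "i1 = i"; cases "i2 = i") auto
  qed
  with \<open>z \<in> Q\<close> show thesis
    by (rule that)
qed

lemma inj_on_diff_extend_left:
  fixes a b :: "'i \<Rightarrow> 'g::ab_group_add"
  assumes "finite S" "finite I" "finite J" "S \<inter> I = {}" "inj_on b J"
    and "inj_on (\<lambda>(i, j). a i - b j) (I \<times> J)" "\<And>i. i \<in> S \<Longrightarrow> infinite (Q i)"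
  shows "\<exists>a'. (\<forall>i\<in>I. a' i = a i) \<and> (\<forall>i\<in>S. a' i \<in> Q i) \<and>
           inj_on (\<lambda>(i, j). a' i - b j) ((I \<union> S) \<times> J)"
  using assms
proof (induction S rule: finite_induct)
  case empty
  then show ?case
    by auto
next
  case (insert i S)
  then obtain a' where a': "\<forall>i\<in>I. a' i = a i" "\<forall>i\<in>S. a' i \<in> Q i"
    "inj_on (\<lambda>(i, j). a' i - b j) ((I \<union> S) \<times> J)"
    by auto
  moreover have "i \<notin> I \<union> S"
    using insert by auto
  ultimately obtain z where "z \<in> Q i" "inj_on (\<lambda>(i', j). (a'(i := z)) i' - b j) (insert i (I \<union> S) \<times> J)"
    using inj_on_diff_insert_left[of "I \<union> S" J b a' "Q i" i] insert by auto
  with a' \<open>i \<notin> I \<union> S\<close> show ?case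
    by (intro exI[of _ "a'(i := z)"]) auto
qed

lemma inj_on_diff_extend_right:
  fixes a b :: "'i \<Rightarrow> 'g::ab_group_add"
  assumes "finite S" "finite I" "finite J" "S \<inter> J = {}" "inj_on a I"
    and "inj_on (\<lambda>(i, j). a i - b j) (I \<times> J)" "\<And>j. j \<in> S \<Longrightarrow> infinite (Q j)"
  shows "\<exists>b'. (\<forall>j\<in>J. b' j = b j) \<and> (\<forall>j\<in>S. b' j \<in> Q j) \<and>
           inj_on (\<lambda>(i, j). a i - b' j) (I \<times> (J \<union> S))"
proof -
  have "inj_on (\<lambda>(j, i). b j - a i) (J \<times> I)"
    using assms(6) by (rule inj_on_diff_swap[THEN iffD1])
  then obtain b' where "\<forall>j\<in>J. b' j = b j" "\<forall>j\<in>S. b' j \<in> Q j"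
    "inj_on (\<lambda>(j, i). b' j - a i) ((J \<union> S) \<times> I)"
    using inj_on_diff_extend_left[of S J I a b Q] assms(1-5,7) by blast
  then show ?thesis
    using inj_on_diff_swap[of a b' I "J \<union> S"] by blast
qed

lemma inj_on_diff_extend:
  fixes a b :: "'i \<Rightarrow> 'g::ab_group_add"
  assumes "finite I" "finite S" "S \<inter> I = {}" "i\<^sub>0 \<in> I" "inj_on (\<lambda>(i, j). a i - b j) (I \<times> I)"
    and "\<And>i. i \<in> S \<Longrightarrow> infinite (Q i)" "\<And>i. i \<in> S \<Longrightarrow> infinite (R i)"
  obtains a' b' where "\<forall>i\<in>I. a' i = a i \<and> b' i = b i" "\<forall>i\<in>S. a' i \<in> Q i \<and> b' i \<in> R i"
    "inj_on (\<lambda>(i, j). a' i - b' j) ((I \<union> S) \<times> (I \<union> S))"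
proof -
  obtain a' where a': "\<forall>i\<in>I. a' i = a i" "\<forall>i\<in>S. a' i \<in> Q i"
    "inj_on (\<lambda>(i, j). a' i - b j) ((I \<union> S) \<times> I)"
    using inj_on_diff_extend_left[OF assms(2,1,1,3) inj_on_diff_imp_inj_on_right[OF assms(5,4)] assms(5)]
      assms(6) by blast
  moreover obtain b' where "\<forall>j\<in>I. b' j = b j" "\<forall>j\<in>S. b' j \<in> R j"
    "inj_on (\<lambda>(i, j). a' i - b' j) ((I \<union> S) \<times> (I \<union> S))"
    using inj_on_diff_extend_right[OF assms(2) _ assms(1) assms(3)
        inj_on_diff_imp_inj_on_left[OF a'(3) assms(4)] a'(3)] assms(1,2,7) by blast
  ultimately show thesis
    using that by blast
qed

lemma condensation_points:
  fixes P :: "'a::{metric_space, second_countable_topology} set"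
  assumes "uncountable (UNIV :: 'a set)"
  defines "P \<equiv> {x. \<forall>e>0. uncountable (ball x e)}"
  shows "P \<noteq> {}" and "\<And>x e. x \<in> P \<Longrightarrow> e > 0 \<Longrightarrow> infinite (P \<inter> ball x e)"
proof -
  obtain \<B> :: "'a set set" where \<B>: "countable \<B>" "topological_basis \<B>"
    using ex_countable_basis by blast
  have "UNIV - P \<subseteq> (\<Union>U \<in> {U \<in> \<B>. countable U}. U)"
  proof
    fix x assume "x \<in> UNIV - P"
    then obtain e where "e > 0" "countable (ball x e)"
      unfolding P_def by auto
    moreover obtain V where "V \<in> \<B>" "x \<in> V" "V \<subseteq> ball x e"
      using topological_basisE[OF \<B>(2), of "ball x e" x] \<open>e > 0\<close> by auto
    ultimately show "x \<in> (\<Union>U \<in> {U \<in> \<B>. countable U}. U)"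
      using countable_subset[of V "ball x e"] by blast
  qed
  moreover have "countable (\<Union>U \<in> {U \<in> \<B>. countable U}. U)"
    using \<B>(1) by (intro countable_UN) auto
  ultimately have co_countable: "countable (UNIV - P)"
    by (rule countable_subset)
  then show "P \<noteq> {}"
    using assms(1) by auto
  fix x :: 'a and e :: real
  assume "x \<in> P" "e > 0"
  then have "uncountable (ball x e)"
    unfolding P_def by auto
  show "infinite (P \<inter> ball x e)"
  proof
    assume "finite (P \<inter> ball x e)"
    then have "countable ((P \<inter> ball x e) \<union> (UNIV - P))"
      using co_countable by (simp add: countable_finite)
    moreover have "ball x e \<subseteq> (P \<inter> ball x e) \<union> (UNIV - P)"
      by auto
    ultimately show False
      using \<open>uncountable (ball x e)\<close> countable_subset by blast
  qed
qed

text \<open>The nodes of level \<open>n\<close> are the subsets of \<open>{..<n}\<close>; the children of \<open>s\<close> are \<open>s\<close> and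
  \<open>insert n s\<close>, and a node keeps its centre when passing to the next level.\<close>

locale cantor_scheme =
  fixes c :: "nat \<Rightarrow> nat set \<Rightarrow> 'a::complete_space" and \<rho> :: "nat \<Rightarrow> real"
  assumes radius_pos: "0 < \<rho> n" and radius_le: "\<rho> n \<le> (1/2) ^ n"
    and radius_halves: "\<rho> (Suc n) \<le> \<rho> n / 2"
    and centre_stable: "s \<in> Pow {..<n} \<Longrightarrow> c (Suc n) s = c n s"
    and centre_close: "s \<in> Pow {..<Suc n} \<Longrightarrow> dist (c (Suc n) s) (c n (s \<inter> {..<n})) \<le> \<rho> n / 2"
    and balls_disjoint: "s \<in> Pow {..<n} \<Longrightarrow> s' \<in> Pow {..<n} \<Longrightarrow> s \<noteq> s' \<Longrightarrow>
      disjnt (cball (c n s) (\<rho> n)) (cball (c n s') (\<rho> n))"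
begin

definition limit_set :: "'a set" where
  "limit_set = (\<Inter>n. \<Union>s\<in>Pow {..<n}. cball (c n s) (\<rho> n))"

lemma mem_limit_set: "x \<in> limit_set \<longleftrightarrow> (\<forall>n. \<exists>s\<in>Pow {..<n}. dist x (c n s) \<le> \<rho> n)"
  unfolding limit_set_def by (auto simp: dist_commute)

lemma centre_stable_le:
  assumes "m \<le> n" "s \<in> Pow {..<m}"
  shows "c n s = c m s"
  using assms(1)
proof (induction n rule: dec_induct)
  case (step k)
  have "s \<in> Pow {..<k}"
    using assms(2) step.hyps(1) by auto
  then show ?case
    using centre_stable[of s k] step.IH by simp
qed simp

lemma cball_nested:
  assumes "m \<le> n" "s \<in> Pow {..<n}" "dist x (c n s) \<le> \<rho> n"
  shows "dist x (c m (s \<inter> {..<m})) \<le> \<rho> m"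
  using assms
proof (induction n arbitrary: s rule: dec_induct)
  case base
  then show ?case
    by (simp add: Int_absorb2)
next
  case (step n)
  have "dist x (c n (s \<inter> {..<n})) \<le> dist x (c (Suc n) s) + dist (c (Suc n) s) (c n (s \<inter> {..<n}))"
    by (rule dist_triangle)
  also have "\<dots> \<le> \<rho> n"
    using step.prems centre_close[of s n] radius_halves[of n] by simp
  finally have "dist x (c m (s \<inter> {..<n} \<inter> {..<m})) \<le> \<rho> m"
    using step.IH[of "s \<inter> {..<n}"] by auto
  moreover have "s \<inter> {..<n} \<inter> {..<m} = s \<inter> {..<m}"
    using step.hyps by auto
  ultimately show ?case
    by simp
qed

lemma centre_in_limit_set:
  assumes "s \<in> Pow {..<m}"
  shows "c m s \<in> limit_set"
  unfolding mem_limit_set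
proof
  fix n
  show "\<exists>s'\<in>Pow {..<n}. dist (c m s) (c n s') \<le> \<rho> n"
  proof (cases "m \<le> n")
    case True
    then show ?thesis
      using centre_stable_le[OF True assms] assms radius_pos[of n] by (intro bexI[of _ s]) auto
  next
    case False
    then have "dist (c m s) (c n (s \<inter> {..<n})) \<le> \<rho> n"
      using cball_nested[of n m s] assms radius_pos[of m] by auto
    then show ?thesis
      by (intro bexI[of _ "s \<inter> {..<n}"]) auto
  qed
qed

lemma limit_set_nonempty: "limit_set \<noteq> {}"
  using centre_in_limit_set[of "{}" 0] by auto

lemma compact_limit_set: "compact limit_set"
  unfolding compact_eq_totally_bounded
proof
  have "closed limit_set"
    unfolding limit_set_def by (intro closed_INT ballI closed_UN) auto
  then show "complete limit_set"
    by (simp add: complete_eq_closed)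
  show "\<forall>e>0. \<exists>k. finite k \<and> limit_set \<subseteq> (\<Union>x\<in>k. ball x e)"
  proof (intro allI impI)
    fix e :: real
    assume "e > 0"
    then obtain n where n: "(1/2::real) ^ n < e"
      using real_arch_pow_inv[of e "1/2"] by auto
    have "limit_set \<subseteq> (\<Union>x\<in>c n ` Pow {..<n}. ball x e)"
    proof
      fix x assume "x \<in> limit_set"
      then obtain s where "s \<in> Pow {..<n}" "dist x (c n s) \<le> \<rho> n"
        unfolding mem_limit_set by blast
      then show "x \<in> (\<Union>x\<in>c n ` Pow {..<n}. ball x e)"
        using radius_le[of n] n by (auto simp: dist_commute intro!: bexI[of _ s])
    qed
    then show "\<exists>k. finite k \<and> limit_set \<subseteq> (\<Union>x\<in>k. ball x e)"
      by (intro exI[of _ "c n ` Pow {..<n}"]) auto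
  qed
qed

lemma islimpt_limit_set:
  assumes "x \<in> limit_set"
  shows "x islimpt limit_set"
  unfolding islimpt_approachable
proof (intro allI impI)
  fix e :: real
  assume "e > 0"
  then obtain n where n: "(1/2::real) ^ n < e / 2"
    using real_arch_pow_inv[of "e/2" "1/2"] by auto
  obtain s where s: "s \<in> Pow {..<Suc n}" "dist x (c (Suc n) s) \<le> \<rho> (Suc n)"
    using assms unfolding mem_limit_set by blast
  define s' where "s' = (if n \<in> s then s - {n} else insert n s)"
  have s': "s' \<in> Pow {..<Suc n}" "s' \<noteq> s" "s' \<inter> {..<n} = s \<inter> {..<n}"
    using s(1) unfolding s'_def by auto
  have "c (Suc n) s' \<noteq> x"
    using balls_disjoint[OF s'(1) s(1) s'(2)] s(2) radius_pos[of "Suc n"]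
    by (auto simp: disjnt_iff dist_commute)
  moreover have "dist (c (Suc n) s') x < e"
  proof -
    have "dist (c (Suc n) s') x \<le> dist (c (Suc n) s') (c n (s \<inter> {..<n})) + dist x (c n (s \<inter> {..<n}))"
      by (rule dist_triangle2)
    also have "\<dots> \<le> \<rho> n / 2 + \<rho> n"
      using centre_close[OF s'(1)] s'(3) cball_nested[of n "Suc n" s x] s by (intro add_mono) auto
    also have "\<dots> < e"
      using radius_le[of n] n \<open>e > 0\<close> by linarith
    finally show ?thesis .
  qed
  ultimately show "\<exists>x'\<in>limit_set. x' \<noteq> x \<and> dist x' x < e"
    using centre_in_limit_set[OF s'(1)] by blast
qed

end

fun cantor_level :: "'g::{metric_space, minus} set \<Rightarrow> nat \<Rightarrow> (nat set \<Rightarrow> 'g) \<times> (nat set \<Rightarrow> 'g) \<times> real \<Rightarrow> bool"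
  where "cantor_level P n (a, b, \<rho>) \<longleftrightarrow>
    0 < \<rho> \<and> \<rho> \<le> (1/2) ^ n \<and> (\<forall>s\<in>Pow {..<n}. a s \<in> P \<and> b s \<in> P) \<and> diff_separated (Pow {..<n}) a b \<rho>"

fun cantor_refines :: "nat \<Rightarrow> (nat set \<Rightarrow> 'g::metric_space) \<times> (nat set \<Rightarrow> 'g) \<times> real \<Rightarrow>
    (nat set \<Rightarrow> 'g) \<times> (nat set \<Rightarrow> 'g) \<times> real \<Rightarrow> bool"
  where "cantor_refines n (a, b, \<rho>) (a', b', \<rho>') \<longleftrightarrow>
    \<rho>' \<le> \<rho> / 2 \<and> (\<forall>s\<in>Pow {..<n}. a' s = a s \<and> b' s = b s) \<and>
    (\<forall>s\<in>Pow {..<Suc n}. dist (a' s) (a (s \<inter> {..<n})) \<le> \<rho> / 2 \<and> dist (b' s) (b (s \<inter> {..<n})) \<le> \<rho> / 2)"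

lemma cantor_level_zero:
  assumes "p \<in> P"
  shows "cantor_level P 0 (\<lambda>_. p, \<lambda>_. p, 1)"
  using assms by (auto simp: diff_separated_def)

lemma cantor_level_Suc:
  fixes P :: "'g::{metric_space, topological_ab_group_add} set"
  assumes dense: "\<And>x e. x \<in> P \<Longrightarrow> e > 0 \<Longrightarrow> infinite (P \<inter> ball x e)"
    and "cantor_level P n (a, b, \<rho>)"
  obtains t where "cantor_level P (Suc n) t" "cantor_refines n (a, b, \<rho>) t"
proof -
  let ?I = "Pow {..<n}" and ?S = "insert n ` Pow {..<n}"
  have \<rho>: "0 < \<rho>" "\<rho> \<le> (1/2) ^ n" and inP: "\<forall>s\<in>?I. a s \<in> P \<and> b s \<in> P"
    and sep: "diff_separated ?I a b \<rho>"
    using assms(2) by auto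
  have Pow_Suc: "Pow {..<Suc n} = ?I \<union> ?S"
    by (simp add: lessThan_Suc Pow_insert)
  have parent: "s - {n} \<in> ?I" "s \<inter> {..<n} = s - {n}" if "s \<in> ?S" for s
    using that by auto
  obtain a' b' where agree: "\<forall>s\<in>?I. a' s = a s \<and> b' s = b s"
    and new: "\<forall>s\<in>?S. a' s \<in> P \<inter> ball (a (s - {n})) (\<rho> / 2) \<and> b' s \<in> P \<inter> ball (b (s - {n})) (\<rho> / 2)"
    and inj: "inj_on (\<lambda>(i, j). a' i - b' j) ((?I \<union> ?S) \<times> (?I \<union> ?S))"
  proof (rule inj_on_diff_extend[of ?I ?S "{}"])
    show "inj_on (\<lambda>(i, j). a i - b j) (?I \<times> ?I)"
      using sep \<rho>(1) by (intro diff_separated_inj_on) auto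
    show "infinite (P \<inter> ball (a (s - {n})) (\<rho> / 2))" "infinite (P \<inter> ball (b (s - {n})) (\<rho> / 2))"
      if "s \<in> ?S" for s
      using dense inP parent(1)[OF that] \<rho>(1) by auto
  qed auto
  obtain \<delta> where "\<delta> > 0" and sep': "diff_separated (?I \<union> ?S) a' b' \<delta>"
    using exists_diff_separated[OF _ inj] by blast
  define \<rho>' where "\<rho>' = min \<delta> (\<rho> / 2)"
  show thesis
  proof (rule that[of "(a', b', \<rho>')"])
    have "\<forall>s\<in>Pow {..<Suc n}. a' s \<in> P \<and> b' s \<in> P"
      unfolding Pow_Suc using agree new inP by auto
    moreover have "diff_separated (Pow {..<Suc n}) a' b' \<rho>'"
      unfolding Pow_Suc \<rho>'_def by (rule diff_separated_mono[OF sep']) simp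
    ultimately show "cantor_level P (Suc n) (a', b', \<rho>')"
      using \<open>\<delta> > 0\<close> \<rho> unfolding \<rho>'_def by auto
    have "\<forall>s\<in>Pow {..<Suc n}. dist (a' s) (a (s \<inter> {..<n})) \<le> \<rho> / 2 \<and> dist (b' s) (b (s \<inter> {..<n})) \<le> \<rho> / 2"
      unfolding Pow_Suc using agree new parent \<rho>(1) by (auto simp: dist_commute Int_absorb2 less_imp_le)
    then show "cantor_refines n (a, b, \<rho>) (a', b', \<rho>')"
      using agree unfolding \<rho>'_def by auto
  qed
qed

lemma cantor_scheme_of_levels:
  assumes level: "\<And>n. cantor_level P n (a n, b n, \<rho> n)"
    and refines: "\<And>n. cantor_refines n (a n, b n, \<rho> n) (a (Suc n), b (Suc n), \<rho> (Suc n))"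
  shows "cantor_scheme a \<rho>" "cantor_scheme b \<rho>"
proof -
  have sep: "diff_separated (Pow {..<n}) (a n) (b n) (\<rho> n)" "0 \<le> \<rho> n" for n
    using level[of n] by auto
  show "cantor_scheme a \<rho>"
    using level refines diff_separated_disjoint_left[OF sep] by unfold_locales auto
  show "cantor_scheme b \<rho>"
    using level refines diff_separated_disjoint_right[OF sep] by unfold_locales auto
qed

lemma inj_on_diff_limit_sets:
  assumes "cantor_scheme a \<rho>" "cantor_scheme b \<rho>"
    and sep: "\<And>n. diff_separated (Pow {..<n}) (a n) (b n) (\<rho> n)"
  shows "inj_on (\<lambda>(x, y). x - y) (cantor_scheme.limit_set a \<rho> \<times> cantor_scheme.limit_set b \<rho>)"
proof (rule inj_onI, clarify, rule ccontr)
  interpret A: cantor_scheme a \<rho> by fact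
  interpret B: cantor_scheme b \<rho> by fact
  fix x y x' y'
  assume mem: "x \<in> A.limit_set" "y \<in> B.limit_set" "x' \<in> A.limit_set" "y' \<in> B.limit_set"
    and eq: "x - y = x' - y'" and ne: "\<not> (x = x' \<and> y = y')"
  then have "0 < dist x x' + dist y y'"
    by (auto simp: add_pos_nonneg add_nonneg_pos)
  then obtain n where n: "(1/2::real) ^ n < (dist x x' + dist y y') / 4"
    using real_arch_pow_inv[of "(dist x x' + dist y y') / 4" "1/2"] by auto
  obtain s t s' t' where st: "s \<in> Pow {..<n}" "t \<in> Pow {..<n}" "s' \<in> Pow {..<n}" "t' \<in> Pow {..<n}"
    and close: "dist x (a n s) \<le> \<rho> n" "dist y (b n t) \<le> \<rho> n" "dist x' (a n s') \<le> \<rho> n" "dist y' (b n t') \<le> \<rho> n"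
    using mem unfolding A.mem_limit_set B.mem_limit_set by meson
  have "(s, t) \<noteq> (s', t')"
  proof
    assume "(s, t) = (s', t')"
    then have "dist x x' \<le> 2 * \<rho> n" "dist y y' \<le> 2 * \<rho> n"
      using close dist_triangle3[of x x' "a n s"] dist_triangle3[of y y' "b n t"] by (auto simp: dist_commute)
    then show False
      using n A.radius_le[of n] by simp
  qed
  then show False
    using sep[of n] st close eq unfolding diff_separated_def by blast
qed

lemma exists_perfect_sets_inj_on_diff:
  assumes "uncountable (UNIV :: 'g set)"
  obtains A B :: "'g::{polish_space, topological_ab_group_add} set"
  where "compact A" "A \<noteq> {}" "\<And>x. x \<in> A \<Longrightarrow> x islimpt A"
    and "compact B" "B \<noteq> {}" "\<And>x. x \<in> B \<Longrightarrow> x islimpt B"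
    and "inj_on (\<lambda>(x, y). x - y) (A \<times> B)"
proof -
  define P where "P = {x :: 'g. \<forall>e>0. uncountable (ball x e)}"
  obtain p where "p \<in> P"
    using condensation_points(1)[OF assms] unfolding P_def by blast
  have dense: "\<And>x e. x \<in> P \<Longrightarrow> e > 0 \<Longrightarrow> infinite (P \<inter> ball x e)"
    using condensation_points(2)[OF assms] unfolding P_def by blast
  obtain f where f: "\<And>n. cantor_level P n (f n) \<and> cantor_refines n (f n) (f (Suc n))"
    using dependent_nat_choice[of "cantor_level P" cantor_refines] cantor_level_zero[OF \<open>p \<in> P\<close>]
      cantor_level_Suc[OF dense] by (metis prod_cases3)
  define a where "a n = fst (f n)" for n
  define b where "b n = fst (snd (f n))" for n
  define \<rho> where "\<rho> n = snd (snd (f n))" for n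
  have f_eq: "f n = (a n, b n, \<rho> n)" for n
    unfolding a_def b_def \<rho>_def by simp
  have level: "cantor_level P n (a n, b n, \<rho> n)"
    and refines: "cantor_refines n (a n, b n, \<rho> n) (a (Suc n), b (Suc n), \<rho> (Suc n))" for n
    using f[of n] unfolding f_eq by auto
  interpret A: cantor_scheme a \<rho>
    using cantor_scheme_of_levels[OF level refines] by blast
  interpret B: cantor_scheme b \<rho>
    using cantor_scheme_of_levels[OF level refines] by blast
  have "diff_separated (Pow {..<n}) (a n) (b n) (\<rho> n)" for n
    using level[of n] by simp
  then show thesis
    using that A.compact_limit_set A.limit_set_nonempty A.islimpt_limit_set
      B.compact_limit_set B.limit_set_nonempty B.islimpt_limit_set
      inj_on_diff_limit_sets[OF A.cantor_scheme_axioms B.cantor_scheme_axioms] by blast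
qed

section \<open>Naively Haar meager sets from perfect compact sets\<close>

lemma nowhere_dense_in_singleton:
  assumes "t1_space K" "k \<in> topspace K" "\<not> openin K {k}"
  shows "nowhere_dense_in K {k}"
proof -
  have "K closure_of {k} = {k}"
    using assms(1,2) by (simp add: closure_of_closedin t1_space_closedin_singleton)
  moreover have "K interior_of {k} = {}"
    using interior_of_subset[of K "{k}"] assms(3)
    by (metis openin_interior_of subset_singletonD)
  ultimately show ?thesis
    unfolding nowhere_dense_in_def using assms(2) by simp
qed

lemma meager_in_countable:
  assumes "t1_space K" "countable D" "\<And>k. k \<in> D \<Longrightarrow> k \<in> topspace K \<and> \<not> openin K {k}"
  shows "meager_in K D"
proof (cases "D = {}")
  case True
  then show ?thesis
    unfolding meager_in_def nowhere_dense_in_def by (intro exI[of _ "\<lambda>_. {}"]) simp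
next
  case False
  have "nowhere_dense_in K {from_nat_into D n}" for n
    using assms(3)[OF from_nat_into[OF False]] by (simp add: nowhere_dense_in_singleton assms(1))
  moreover have "D \<subseteq> (\<Union>n. {from_nat_into D n})"
    using range_from_nat_into[OF False assms(2)] by blast
  ultimately show ?thesis
    unfolding meager_in_def by (intro exI[of _ "\<lambda>n. {from_nat_into D n}"] conjI allI)
qed

lemma not_meager_in_topspace:
  assumes "topspace K \<noteq> {}" "compact_space K" "metrizable_space K"
  shows "\<not> meager_in K (topspace K)"
proof
  assume "meager_in K (topspace K)"
  then obtain F :: "nat \<Rightarrow> _" where F: "\<And>n. nowhere_dense_in K (F n)" "topspace K \<subseteq> (\<Union>n. F n)"
    unfolding meager_in_def by blast
  have "K interior_of \<Union>(range (\<lambda>n. K closure_of F n)) = {}"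
  proof (rule Baire_category_alt)
    show "completely_metrizable_space K \<or> locally_compact_space K \<and> regular_space K"
      using compact_imp_locally_compact_space[OF assms(2)] metrizable_imp_regular_space[OF assms(3)] by blast
    show "countable (range (\<lambda>n. K closure_of F n))"
      by simp
    show "closedin K T \<and> K interior_of T = {}" if "T \<in> range (\<lambda>n. K closure_of F n)" for T
      using F(1) that unfolding nowhere_dense_in_def by auto
  qed
  moreover have "F n \<subseteq> K closure_of F n" for n
    using F(1) unfolding nowhere_dense_in_def by (simp add: closure_of_subset)
  then have "\<Union>(range (\<lambda>n. K closure_of F n)) = topspace K"
    using F(2) closure_of_subset_topspace by fastforce
  ultimately show False
    using assms(1) by (simp add: interior_of_topspace)
qed

lemma homeomorphic_map_pullback_inv:
  assumes "inj \<iota>"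
  shows "homeomorphic_map (pullback_topology (\<iota> ` topspace X) (inv \<iota>) X) X (inv \<iota>)"
proof -
  let ?K = "pullback_topology (\<iota> ` topspace X) (inv \<iota>) X"
  have "homeomorphic_maps ?K X (inv \<iota>) \<iota>"
    unfolding homeomorphic_maps_def
  proof (intro conjI)
    show "continuous_map ?K X (inv \<iota>)"
      using continuous_map_pullback[OF continuous_map_id] by (simp add: o_def)
    show "continuous_map X ?K \<iota>"
      by (rule continuous_map_pullback') (use assms in \<open>auto simp: o_def\<close>)
  qed (use assms in \<open>auto simp: topspace_pullback_topology\<close>)
  then show ?thesis
    using homeomorphic_maps_map by blast
qed

lemma not_openin_singleton_islimpt:
  assumes "x islimpt A"
  shows "\<not> openin (top_of_set A) {x}"
proof
  assume "openin (top_of_set A) {x}"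
  then obtain T where "open T" "{x} = T \<inter> A"
    unfolding openin_open by blast
  then show False
    using assms unfolding islimpt_def by blast
qed

lemma not_naively_haar_meager_UNIV:
  "\<not> naively_haar_meager (UNIV :: 'g::{polish_space, topological_ab_group_add} set)"
proof
  assume "naively_haar_meager (UNIV :: 'g set)"
  then obtain K :: "real topology" and f :: "real \<Rightarrow> 'g"
    where "topspace K \<noteq> {}" "compact_space K" "metrizable_space K"
      and "meager_in K {k \<in> topspace K. f k \<in> {0 + x + 0 | x. x \<in> UNIV}}"
    unfolding naively_haar_meager_def by blast
  then show False
    using not_meager_in_topspace by auto
qed

lemma inj_into_real_second_countable:
  obtains \<iota> :: "'a::{metric_space, second_countable_topology} \<Rightarrow> real" where "inj \<iota>"
proof -
  obtain \<B> :: "'a set set" where \<B>: "countable \<B>" "topological_basis \<B>"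
    using ex_countable_basis by blast
  define \<phi> where "\<phi> x = {n. x \<in> from_nat_into \<B> n}" for x
  have "inj \<phi>"
  proof (rule injI, rule ccontr)
    fix x y assume eq: "\<phi> x = \<phi> y" and "x \<noteq> y"
    then obtain V where V: "V \<in> \<B>" "x \<in> V" "y \<notin> V"
      using topological_basisE[OF \<B>(2), of "- {y}" x] by (auto simp: open_Compl)
    then have "to_nat_on \<B> V \<in> \<phi> x" "to_nat_on \<B> V \<notin> \<phi> y"
      using \<B>(1) unfolding \<phi>_def by auto
    with eq show False by simp
  qed
  moreover obtain g :: "nat set \<Rightarrow> real" where "bij g"
    using nat_sets_eqpoll_reals unfolding eqpoll_def by blast
  ultimately show thesis
    using that[of "g \<circ> \<phi>"] by (simp add: bij_is_inj inj_compose)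
qed

lemma naively_haar_meagerI:
  fixes A Y :: "'g::{polish_space, topological_ab_group_add} set"
  assumes "compact A" "A \<noteq> {}" "\<And>x. x \<in> A \<Longrightarrow> x islimpt A"
    and traces: "\<And>c. countable {x \<in> A. x - c \<in> Y}"
  shows "naively_haar_meager Y"
proof -
  obtain \<iota> :: "'g \<Rightarrow> real" where "inj \<iota>"
    using inj_into_real_second_countable by blast
  \<comment> \<open>a copy of \<open>A\<close> carried by a set of reals, as the definition demands\<close>
  define K where "K = pullback_topology (\<iota> ` A) (inv \<iota>) (top_of_set A)"
  have hom: "homeomorphic_map K (top_of_set A) (inv \<iota>)"
    using homeomorphic_map_pullback_inv[OF \<open>inj \<iota>\<close>, of "top_of_set A"] unfolding K_def by simp
  then have hs: "K homeomorphic_space top_of_set A"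
    using homeomorphic_space by blast
  have "compact_space K"
    using homeomorphic_compact_space[OF hs] \<open>compact A\<close> by (simp add: compact_space_subtopology)
  have "metrizable_space K"
    using homeomorphic_metrizable_space[OF hs] metrizable_space_subtopology[OF metrizable_space_euclidean]
    by simp
  have topK: "topspace K = \<iota> ` A"
    using \<open>inj \<iota>\<close> by (auto simp: K_def topspace_pullback_topology)
  have "continuous_map K euclidean (inv \<iota>)"
    using homeomorphic_imp_continuous_map[OF hom] by (simp add: continuous_map_in_subtopology)
  moreover have "meager_in K {k \<in> topspace K. inv \<iota> k \<in> {g + x + h | x. x \<in> Y}}" for g h
  proof (rule meager_in_countable)
    show "t1_space K"
      using \<open>metrizable_space K\<close> by (rule metrizable_imp_t1_space)
    have "{k \<in> topspace K. inv \<iota> k \<in> {g + x + h | x. x \<in> Y}} \<subseteq> \<iota> ` {x \<in> A. x - (g + h) \<in> Y}"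
      using \<open>inj \<iota>\<close> by (auto simp: topK image_iff algebra_simps)
    then show "countable {k \<in> topspace K. inv \<iota> k \<in> {g + x + h | x. x \<in> Y}}"
      by (rule countable_subset[OF _ countable_image[OF traces]])
    show "k \<in> topspace K \<and> \<not> openin K {k}"
      if "k \<in> {k \<in> topspace K. inv \<iota> k \<in> {g + x + h | x. x \<in> Y}}" for k
    proof -
      have "inv \<iota> k \<in> A"
        using that \<open>inj \<iota>\<close> topK by auto
      moreover have "\<not> openin (top_of_set A) {inv \<iota> k}"
        using assms(3)[OF \<open>inv \<iota> k \<in> A\<close>] by (rule not_openin_singleton_islimpt)
      ultimately show ?thesis
        using that homeomorphic_map_openness_eq[OF hom, of "{k}"] by auto
    qed
  qed
  ultimately show ?thesis
    unfolding naively_haar_meager_def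
    using \<open>compact_space K\<close> \<open>metrizable_space K\<close> topK \<open>A \<noteq> {}\<close> by blast
qed

section \<open>A splitting set under the Continuum Hypothesis\<close>

lemma uncountable_eqpoll_UNIV:
  fixes S :: "'a::{metric_space, second_countable_topology} set"
  assumes "continuum_hypothesis" "uncountable S"
  shows "S \<approx> (UNIV :: 'a set)"
proof -
  obtain \<iota> :: "'a \<Rightarrow> real" where "inj \<iota>"
    using inj_into_real_second_countable by blast
  have eqpoll_image: "T \<approx> \<iota> ` T" for T
    using inj_on_image_eqpoll_self[OF inj_on_subset[OF \<open>inj \<iota>\<close> subset_UNIV]] by (rule eqpoll_sym)
  have "\<iota> ` T \<approx> (UNIV :: real set)" if "uncountable T" for T
  proof -
    have "uncountable (\<iota> ` T)"
      using that countable_image_inj_on[OF _ inj_on_subset[OF \<open>inj \<iota>\<close> subset_UNIV]] by blast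
    then show ?thesis
      using assms(1) unfolding continuum_hypothesis_def by blast
  qed
  moreover have "uncountable (UNIV :: 'a set)"
    using assms(2) countable_subset[OF subset_UNIV] by blast
  ultimately have "\<iota> ` S \<approx> \<iota> ` UNIV"
    using assms(2) eqpoll_trans[OF _ eqpoll_sym] by blast
  then have "S \<approx> \<iota> ` UNIV"
    using eqpoll_image eqpoll_trans by blast
  then show ?thesis
    using eqpoll_image eqpoll_trans eqpoll_sym by blast
qed

context
  includes cardinal_syntax
begin

lemma countable_underS_card_of_UNIV:
  assumes "\<And>S :: 'a set. uncountable S \<Longrightarrow> S \<approx> (UNIV :: 'a set)"
  shows "countable (underS |UNIV :: 'a set| a)"
proof (rule ccontr)
  assume "uncountable (underS |UNIV :: 'a set| a)"
  then have "|underS |UNIV :: 'a set| a| =o |UNIV :: 'a set|"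
    using assms unfolding eqpoll_def by (simp add: card_of_ordIso)
  moreover have "|underS |UNIV :: 'a set| a| <o |UNIV :: 'a set|"
    by (rule card_of_underS[OF card_of_Card_order]) (simp add: Field_card_of)
  ultimately show False
    using not_ordLess_ordIso by blast
qed

end

lemma countable_subsingleton: "(\<And>x y. x \<in> S \<Longrightarrow> y \<in> S \<Longrightarrow> x = y) \<Longrightarrow> countable S"
  by (metis countable_empty countable_insert insertI1 subsetI subset_singletonD countable_subset)

lemma countable_trace_left:
  fixes A B :: "'g::ab_group_add set"
  assumes "inj_on (\<lambda>(x, y). x - y) (A \<times> B)"
  shows "countable {x \<in> A. x - t \<in> B}"
proof (rule countable_subsingleton)
  fix x x' assume "x \<in> {x \<in> A. x - t \<in> B}" "x' \<in> {x \<in> A. x - t \<in> B}"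
  then show "x = x'"
    using inj_onD[OF assms, of "(x, x - t)" "(x', x' - t)"] by auto
qed

lemma countable_trace_right:
  fixes A B :: "'g::ab_group_add set"
  assumes "inj_on (\<lambda>(x, y). x - y) (A \<times> B)"
  shows "countable {y \<in> B. y + t \<in> A}"
proof (rule countable_subsingleton)
  fix y y' assume "y \<in> {y \<in> B. y + t \<in> A}" "y' \<in> {y \<in> B. y + t \<in> A}"
  then show "y = y'"
    using inj_onD[OF assms, of "(y + t, y)" "(y' + t, y')"] by auto
qed

definition splitting_set :: "'g::ab_group_add rel \<Rightarrow> 'g set \<Rightarrow> 'g set \<Rightarrow> 'g set" where
  "splitting_set r A B = {z. \<exists>g. z - g \<in> B \<and> (\<forall>h \<in> underS r g. z - h \<notin> A)}"

lemma countable_trace_splitting_set: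
  fixes A B :: "'g::ab_group_add set"
  assumes "Well_order r" "Field r = UNIV" "\<And>a. countable (underS r a)"
    and inj_diff: "inj_on (\<lambda>(x, y). x - y) (A \<times> B)"
  shows "countable {x \<in> A. x - c \<in> splitting_set r A B}"
proof -
  have total: "a \<in> underS r b" if "b \<notin> insert a (underS r a)" for a b
    using that assms(1,2) unfolding well_order_on_def linear_order_on_def total_on_def underS_def
    by auto
  have "{x \<in> A. x - c \<in> splitting_set r A B} \<subseteq>
      (\<Union>g \<in> insert (- c) (underS r (- c)). {x \<in> A. x - (c + g) \<in> B})"
  proof
    fix x assume x: "x \<in> {x \<in> A. x - c \<in> splitting_set r A B}"
    then obtain g where g: "x - c - g \<in> B" "\<forall>h \<in> underS r g. x - c - h \<notin> A"
      unfolding splitting_set_def by blast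
    have "g \<in> insert (- c) (underS r (- c))"
    proof (rule ccontr)
      assume "g \<notin> insert (- c) (underS r (- c))"
      then have "x - c - (- c) \<notin> A"
        using g(2) total by blast
      with x show False
        by simp
    qed
    with x g(1) show "x \<in> (\<Union>g \<in> insert (- c) (underS r (- c)). {x \<in> A. x - (c + g) \<in> B})"
      by (auto simp: diff_diff_eq)
  qed
  moreover have "countable (\<Union>g \<in> insert (- c) (underS r (- c)). {x \<in> A. x - (c + g) \<in> B})"
    using assms(3) countable_trace_left[OF inj_diff] by blast
  ultimately show ?thesis
    by (rule countable_subset)
qed

lemma countable_trace_compl_splitting_set:
  fixes A B :: "'g::ab_group_add set"
  assumes "\<And>a. countable (underS r a)" and inj_diff: "inj_on (\<lambda>(x, y). x - y) (A \<times> B)"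
  shows "countable {y \<in> B. y - c \<in> UNIV - splitting_set r A B}"
proof -
  have "{y \<in> B. y - c \<in> UNIV - splitting_set r A B} \<subseteq>
      (\<Union>h \<in> underS r (- c). {y \<in> B. y + (- c - h) \<in> A})"
  proof
    fix y assume y: "y \<in> {y \<in> B. y - c \<in> UNIV - splitting_set r A B}"
    then have "\<not> (\<forall>h \<in> underS r (- c). y - c - h \<notin> A)"
      unfolding splitting_set_def by force
    with y show "y \<in> (\<Union>h \<in> underS r (- c). {y \<in> B. y + (- c - h) \<in> A})"
      by (auto simp: algebra_simps)
  qed
  moreover have "countable (\<Union>h \<in> underS r (- c). {y \<in> B. y + (- c - h) \<in> A})"
    using assms(1) countable_trace_right[OF inj_diff] by blast
  ultimately show ?thesis
    by (rule countable_subset)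
qed

theorem proposition3p6:
  assumes CH: "continuum_hypothesis"
    and uncountable: "uncountable (UNIV :: 'g :: {polish_space, topological_ab_group_add} set)"
  shows "\<exists>X :: 'g set. naively_haar_meager X \<and> naively_haar_meager (UNIV - X)
            \<and> \<not> naively_haar_meager (X \<union> (UNIV - X))"
proof -
  obtain A B :: "'g set"
    where A: "compact A" "A \<noteq> {}" "\<And>x. x \<in> A \<Longrightarrow> x islimpt A"
      and B: "compact B" "B \<noteq> {}" "\<And>x. x \<in> B \<Longrightarrow> x islimpt B"
      and inj_diff: "inj_on (\<lambda>(x, y). x - y) (A \<times> B)"
    using exists_perfect_sets_inj_on_diff[OF uncountable] by blast
  let ?r = "card_of (UNIV :: 'g set)"
  let ?X = "splitting_set ?r A B"
  have segments: "\<And>a. countable (underS ?r a)"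
    by (rule countable_underS_card_of_UNIV[OF uncountable_eqpoll_UNIV[OF CH]])
  have "naively_haar_meager ?X"
    by (rule naively_haar_meagerI[OF A
          countable_trace_splitting_set[OF card_of_Well_order Field_card_of segments inj_diff]])
  moreover have "naively_haar_meager (UNIV - ?X)"
    by (rule naively_haar_meagerI[OF B countable_trace_compl_splitting_set[OF segments inj_diff]])
  moreover have "\<not> naively_haar_meager (?X \<union> (UNIV - ?X))"
    using not_naively_haar_meager_UNIV by (simp add: Un_Diff_cancel)
  ultimately show ?thesis
    by blast
qed

end
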